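(* Let $N\ge1$ and $p$ as in the standing assumptions. For every $R\in[0,1]$, $$\limsup_{\alpha\to\infty}S_{\alpha,R}\,\alpha^{N-2-\frac{2N}{p+1}}\le\min\left\{e^{\frac{4}{R(p+1)}},e^{\frac{4}{(1-R)(p+1)}}\right\}S\le e^{\frac{8}{p+1}}S,$$ with the convention that $e^{4/(R(p+1))}=+\infty$ if $R=0$ and $e^{4/((1-R)(p+1))}=+\infty$ if $R=1$.
   Context: $B=B(0,1)\subset\mathbb R^N$; standing assumption: $p\in(1,\frac{N+2}{N-2})$ if $N\ge3$, $p>1$ if $N=1,2$. For $\alpha>0$, $R\in(0,1)$, $V_{R,\alpha}(r)=(1-r/R)^\alpha$ for $0\le r<R$ and $\left(1-\frac{1-r}{1-R}\right)^\alpha$ for $R\le r\le1$; $V_{0,\alpha}(|x|)=|x|^\alpha$, $V_{1,\alpha}(|x|)=(1-|x|)^\alpha$. $S_{\alpha,R}=\inf_{0\ne u\in H^1_0(B)}\frac{\int_B|Du|^2}{(\int_BV_{R,\alpha}(|x|)|u|^{p+1})^{2/(p+1)}}$. $S=\inf_{0\ne u\in H^1_0(B)}\frac{\int_B|Du|^2}{(\int_B|u|^{p+1})^{2/(p+1)}}$. *)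

theory Defs
  imports "HOL-Analysis.Analysis"
begin

text \<open>Smooth (C-infinity) real functions on a Euclidean space: there is a family of
  functions containing f, closed under taking partial derivatives, each member being
  (Frechet) differentiable everywhere with derivative given by its partials.\<close>
definition smooth_fun :: "('a::euclidean_space \<Rightarrow> real) \<Rightarrow> bool" where
  "smooth_fun f \<longleftrightarrow> (\<exists>F. f \<in> F \<and> (\<forall>h\<in>F. \<exists>D. (\<forall>i\<in>Basis. D i \<in> F) \<and>
      (\<forall>x. (h has_derivative (\<lambda>v. \<Sum>i\<in>Basis. (v \<bullet> i) * D i x)) (at x))))"

abbreviation unit_ball :: "'a::euclidean_space set" where
  "unit_ball \<equiv> ball 0 1"

definition test_fun :: "('a::euclidean_space \<Rightarrow> real) \<Rightarrow> ('a \<Rightarrow> 'a) \<Rightarrow> bool" where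
  "test_fun \<phi> G \<longleftrightarrow> smooth_fun \<phi> \<and> (\<forall>x. (\<phi> has_derivative (\<lambda>v. G x \<bullet> v)) (at x)) \<and>
     (\<exists>K. compact K \<and> K \<subseteq> unit_ball \<and> (\<forall>x. x \<notin> K \<longrightarrow> \<phi> x = 0))"

text \<open>H^1_0(B) = closure of C_c^infinity(B) in H^1(B): u is in H^1_0(B) with (weak)
  gradient g iff u, |g| are in L^2(B) and there are test functions phi_n with
  phi_n \<rightarrow> u and grad phi_n \<rightarrow> g in L^2(B).\<close>
definition H10 :: "('a::euclidean_space \<Rightarrow> real) \<Rightarrow> ('a \<Rightarrow> 'a) \<Rightarrow> bool" where
  "H10 u g \<longleftrightarrow> u \<in> borel_measurable lborel \<and> g \<in> borel_measurable lborel \<and>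
     set_integrable lborel unit_ball (\<lambda>x. (u x)\<^sup>2) \<and>
     set_integrable lborel unit_ball (\<lambda>x. (norm (g x))\<^sup>2) \<and>
     (\<exists>\<phi> G. (\<forall>n. test_fun (\<phi> n) (G n)) \<and>
        (\<lambda>n. LINT x : unit_ball | lborel. (\<phi> n x - u x)\<^sup>2) \<longlonglongrightarrow> 0 \<and>
        (\<lambda>n. LINT x : unit_ball | lborel. (norm (G n x - g x))\<^sup>2) \<longlonglongrightarrow> 0)"

definition H10_nonzero :: "('a::euclidean_space \<Rightarrow> real) \<Rightarrow> bool" where
  "H10_nonzero u \<longleftrightarrow> \<not> (AE x in lborel. x \<in> unit_ball \<longrightarrow> u x = 0)"

definition Sweight :: "(real \<Rightarrow> real) \<Rightarrow> real \<Rightarrow> 'a::euclidean_space itself \<Rightarrow> real" where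
  "Sweight W p _ = Inf {(LINT x : unit_ball | lborel. (norm (g x))\<^sup>2) /
        (LINT x : unit_ball | lborel. W (norm x) * \<bar>u x\<bar> powr (p + 1)) powr (2 / (p + 1))
      | (u :: 'a \<Rightarrow> real) g. H10 u g \<and> H10_nonzero u}"

definition V :: "real \<Rightarrow> real \<Rightarrow> real \<Rightarrow> real" where
  "V R \<alpha> r = (if R = 0 then r powr \<alpha>
     else if R = 1 then (1 - r) powr \<alpha>
     else if r < R then (1 - r / R) powr \<alpha>
     else (1 - (1 - r) / (1 - R)) powr \<alpha>)"

definition S_alpha_R :: "real \<Rightarrow> real \<Rightarrow> real \<Rightarrow> 'a::euclidean_space itself \<Rightarrow> real" where
  "S_alpha_R p \<alpha> R T = Sweight (V R \<alpha>) p T"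

definition S_const :: "real \<Rightarrow> 'a::euclidean_space itself \<Rightarrow> real" where
  "S_const p T = Sweight (\<lambda>_. 1) p T"

text \<open>Standing assumption on p, N = dimension.\<close>
definition admissible_p :: "nat \<Rightarrow> real \<Rightarrow> bool" where
  "admissible_p N p \<longleftrightarrow> 1 < p \<and> (N \<ge> 3 \<longrightarrow> p < (real N + 2) / (real N - 2))"

end

theory Submission
  imports Defs "HOL-Computational_Algebra.Polynomial"
begin

text \<open>Transplant a fixed admissible u of the unweighted problem affinely into a ball of radius
  1/\<alpha> inside B. The Dirichlet integral scales by \<alpha>^(2-N) and the L^(p+1) integral by \<alpha>^(-N), so
  the quotient scales by \<alpha>^(2-N+2N/(p+1)), which the normalising power of \<alpha> exactly compensates;
  a lower bound m for the weight on the ball costs a factor m^(-2/(p+1)). On the ball around the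
  centre V_{R,\<alpha>} \<ge> (1 - 2/(R\<alpha>))^\<alpha> \<longrightarrow> e^(-2/R), on the ball touching the sphere
  V_{R,\<alpha>} \<ge> (1 - 2/((1-R)\<alpha>))^\<alpha> \<longrightarrow> e^(-2/(1-R)); the infimum over u gives the bound.
  The last inequality is min (1/R) (1/(1-R)) \<le> 2.\<close>

section \<open>Affine changes of variables\<close>

lemma nn_integral_lborel_affine:
  fixes f :: "'a::euclidean_space \<Rightarrow> ennreal"
  assumes [measurable]: "f \<in> borel_measurable borel" and c: "c \<noteq> 0"
  shows "(\<integral>\<^sup>+x. f x \<partial>lborel) = ennreal (\<bar>c\<bar> ^ DIM('a)) * (\<integral>\<^sup>+x. f (t + c *\<^sub>R x) \<partial>lborel)"
  by (subst lborel_affine[OF c, of t])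
     (simp add: nn_integral_density nn_integral_distr nn_integral_cmult)

lemma lborel_integrable_affine:
  fixes f :: "'a::euclidean_space \<Rightarrow> real"
  assumes f: "integrable lborel f" and c: "c \<noteq> 0"
  shows "integrable lborel (\<lambda>x. f (t + c *\<^sub>R x))"
proof -
  have [measurable]: "f \<in> borel_measurable borel"
    using borel_measurable_integrable[OF f] by simp
  have "(\<integral>\<^sup>+x. ennreal (norm (f x)) \<partial>lborel) < \<infinity>"
    using f unfolding integrable_iff_bounded by simp
  then have "ennreal (\<bar>c\<bar> ^ DIM('a)) * (\<integral>\<^sup>+x. ennreal (norm (f (t + c *\<^sub>R x))) \<partial>lborel) < \<infinity>"
    by (subst (asm) nn_integral_lborel_affine[where c=c and t=t]) (auto simp: c)
  then have "(\<integral>\<^sup>+x. ennreal (norm (f (t + c *\<^sub>R x))) \<partial>lborel) < \<infinity>"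
    using c by (auto simp add: ennreal_mult_less_top top.not_eq_extremum)
  then show ?thesis unfolding integrable_iff_bounded by simp
qed

lemma lborel_integrable_affine_iff:
  fixes f :: "'a::euclidean_space \<Rightarrow> real"
  assumes c: "c \<noteq> 0"
  shows "integrable lborel (\<lambda>x. f (t + c *\<^sub>R x)) \<longleftrightarrow> integrable lborel f"
proof
  assume "integrable lborel (\<lambda>x. f (t + c *\<^sub>R x))"
  from lborel_integrable_affine[OF this, of "1/c" "- t /\<^sub>R c"] c
  show "integrable lborel f" by (simp add: algebra_simps)
qed (use lborel_integrable_affine c in auto)

lemma lborel_integral_affine:
  fixes f :: "'a::euclidean_space \<Rightarrow> real"
  assumes c: "c \<noteq> 0"
  shows "(\<integral>x. f x \<partial>lborel) = \<bar>c\<bar> ^ DIM('a) * (\<integral>x. f (t + c *\<^sub>R x) \<partial>lborel)"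
proof cases
  assume f[measurable]: "integrable lborel f"
  then show ?thesis
    using c borel_measurable_integrable[OF f] lborel_integrable_affine[OF f c, of t]
    by (subst lborel_affine[OF c, of t]) (simp add: integral_density integral_distr)
next
  assume "\<not> integrable lborel f"
  with c show ?thesis
    by (simp add: lborel_integrable_affine_iff not_integrable_integral_eq)
qed

lemma AE_lborel_affine:
  fixes P :: "'a::euclidean_space \<Rightarrow> bool"
  assumes c: "c \<noteq> 0" and [measurable]: "Measurable.pred borel P"
    and ae: "AE x in lborel. P (t + c *\<^sub>R x)"
  shows "AE y in lborel. P y"
proof -
  have "AE y in distr lborel borel (\<lambda>x. t + c *\<^sub>R x). P y"
    by (subst AE_distr_iff) (use ae in auto)
  then have "AE y in density (distr lborel borel (\<lambda>x. t + c *\<^sub>R x)) (\<lambda>_. \<bar>c\<bar> ^ DIM('a)). P y"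
    by (subst AE_density) (auto elim: AE_mp)
  then show ?thesis
    by (subst lborel_affine[OF c, of t])
qed

lemma smooth_fun_affine:
  fixes f :: "'a::euclidean_space \<Rightarrow> real"
  assumes "smooth_fun f"
  shows "smooth_fun (\<lambda>x. f (t + c *\<^sub>R x))"
proof -
  obtain F where fF: "f \<in> F" and F: "\<forall>h\<in>F. \<exists>D. (\<forall>i\<in>Basis. D i \<in> F) \<and>
      (\<forall>x. (h has_derivative (\<lambda>v. \<Sum>i\<in>Basis. (v \<bullet> i) * D i x)) (at x))"
    using assms unfolding smooth_fun_def by blast
  define F' where "F' = {(\<lambda>x. k * h (t + c *\<^sub>R x)) | k h. h \<in> F}"
  have "(\<lambda>x. f (t + c *\<^sub>R x)) \<in> F'"
    unfolding F'_def using fF by (intro CollectI exI[of _ 1] exI[of _ f]) auto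
  moreover have "\<exists>D. (\<forall>i\<in>Basis. D i \<in> F') \<and>
      (\<forall>x. (h' has_derivative (\<lambda>v. \<Sum>i\<in>Basis. (v \<bullet> i) * D i x)) (at x))" if "h' \<in> F'" for h'
  proof -
    obtain k h where h': "h' = (\<lambda>x. k * h (t + c *\<^sub>R x))" and "h \<in> F"
      using \<open>h' \<in> F'\<close> unfolding F'_def by blast
    then obtain D where DF: "\<forall>i\<in>Basis. D i \<in> F"
      and D: "\<And>x. (h has_derivative (\<lambda>v. \<Sum>i\<in>Basis. (v \<bullet> i) * D i x)) (at x)"
      using F by blast
    define D' where "D' i = (\<lambda>x. (k * c) * D i (t + c *\<^sub>R x))" for i
    have "\<forall>i\<in>Basis. D' i \<in> F'"
      unfolding F'_def D'_def using DF by blast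
    moreover have "(h' has_derivative (\<lambda>v. \<Sum>i\<in>Basis. (v \<bullet> i) * D' i x)) (at x)" for x
    proof -
      have "((\<lambda>x. t + c *\<^sub>R x) has_derivative (\<lambda>v. c *\<^sub>R v)) (at x)"
        by (auto intro!: derivative_eq_intros)
      from has_derivative_compose[OF this D]
      have "((\<lambda>x. k * h (t + c *\<^sub>R x)) has_derivative
          (\<lambda>v. k * (\<Sum>i\<in>Basis. ((c *\<^sub>R v) \<bullet> i) * D i (t + c *\<^sub>R x)))) (at x)"
        by (rule has_derivative_mult_right)
      moreover have "(\<lambda>v. k * (\<Sum>i\<in>Basis. ((c *\<^sub>R v) \<bullet> i) * D i (t + c *\<^sub>R x)))
          = (\<lambda>v. \<Sum>i\<in>Basis. (v \<bullet> i) * D' i x)"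
        by (auto simp: D'_def sum_distrib_left intro!: sum.cong)
      ultimately show ?thesis using h' by simp
    qed
    ultimately show ?thesis by blast
  qed
  ultimately show ?thesis unfolding smooth_fun_def by blast
qed

lemma test_fun_affine:
  fixes \<phi> :: "'a::euclidean_space \<Rightarrow> real"
  assumes "test_fun \<phi> G" and c: "c \<noteq> 0"
    and into: "\<And>x. t + c *\<^sub>R x \<in> unit_ball \<Longrightarrow> x \<in> unit_ball"
  shows "test_fun (\<lambda>x. \<phi> (t + c *\<^sub>R x)) (\<lambda>x. c *\<^sub>R G (t + c *\<^sub>R x))"
proof -
  have smooth: "smooth_fun \<phi>" and D: "\<And>x. (\<phi> has_derivative (\<lambda>v. G x \<bullet> v)) (at x)"
    using assms unfolding test_fun_def by auto
  obtain K where K: "compact K" "K \<subseteq> unit_ball" "\<And>x. x \<notin> K \<Longrightarrow> \<phi> x = 0"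
    using assms unfolding test_fun_def by blast
  define K' where "K' = (\<lambda>y. (1/c) *\<^sub>R (y - t)) ` K"
  have "compact K'"
    unfolding K'_def by (intro compact_continuous_image K continuous_intros)
  moreover have "K' \<subseteq> unit_ball"
  proof
    fix x assume "x \<in> K'"
    then obtain y where "y \<in> K" "x = (1/c) *\<^sub>R (y - t)" unfolding K'_def by blast
    then have "t + c *\<^sub>R x = y" using c by simp
    then show "x \<in> unit_ball" using into K(2) \<open>y \<in> K\<close> by blast
  qed
  moreover have "\<phi> (t + c *\<^sub>R x) = 0" if "x \<notin> K'" for x
  proof -
    have "(1/c) *\<^sub>R ((t + c *\<^sub>R x) - t) = x" using c by simp
    then have "t + c *\<^sub>R x \<notin> K" using that unfolding K'_def by (metis image_eqI)
    then show ?thesis using K(3) by blast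
  qed
  moreover have "((\<lambda>x. \<phi> (t + c *\<^sub>R x)) has_derivative (\<lambda>v. (c *\<^sub>R G (t + c *\<^sub>R x)) \<bullet> v)) (at x)" for x
  proof -
    have "((\<lambda>x. t + c *\<^sub>R x) has_derivative (\<lambda>v. c *\<^sub>R v)) (at x)"
      by (auto intro!: derivative_eq_intros)
    from has_derivative_compose[OF this D] show ?thesis by simp
  qed
  ultimately show ?thesis unfolding test_fun_def using smooth_fun_affine[OF smooth] by blast
qed

lemma test_fun_vanishes_outside_ball:
  fixes \<phi> :: "'a::euclidean_space \<Rightarrow> real"
  assumes "test_fun \<phi> G" and "x \<notin> unit_ball"
  shows "\<phi> x = 0 \<and> G x = 0"
proof -
  have D: "(\<phi> has_derivative (\<lambda>v. G x \<bullet> v)) (at x)"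
    using assms unfolding test_fun_def by auto
  obtain K where K: "compact K" "K \<subseteq> unit_ball" "\<And>x. x \<notin> K \<Longrightarrow> \<phi> x = 0"
    using assms unfolding test_fun_def by blast
  have "x \<notin> K" using K(2) assms(2) by blast
  have "((\<lambda>_. 0) has_derivative (\<lambda>v. 0)) (at x)" by simp
  then have "(\<phi> has_derivative (\<lambda>v. 0)) (at x)"
    by (rule has_derivative_transform_within_open[where s="- K"])
       (use \<open>x \<notin> K\<close> K in \<open>auto simp: compact_imp_closed open_Compl\<close>)
  then have "(\<lambda>v. G x \<bullet> v) = (\<lambda>v. 0)" using has_derivative_unique D by blast
  then have "G x \<bullet> G x = 0" by meson
  then show ?thesis using K(3) \<open>x \<notin> K\<close> by simp
qed

section \<open>A smooth bump function\<close>

text \<open>The functions t \<mapsto> P(1/t) exp(-1/t) for t > 0, extended by 0, are closed under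
  differentiation; composed with 1/4 - |x|^2 they give a smooth bump supported in cball 0 (1/2).\<close>

definition flat_exp :: "real poly \<Rightarrow> real \<Rightarrow> real" where
  "flat_exp P t = (if 0 < t then poly P (1/t) * exp (-1/t) else 0)"

definition flat_exp_deriv_poly :: "real poly \<Rightarrow> real poly" where
  "flat_exp_deriv_poly P = monom 1 2 * (P - pderiv P)"

lemma poly_times_exp_neg_tendsto_0:
  fixes P :: "real poly"
  shows "((\<lambda>s. poly P s * exp (-s)) \<longlongrightarrow> 0) at_top"
proof -
  have "((\<lambda>s. \<Sum>i\<le>degree P. coeff P i * (s ^ i / exp s)) \<longlongrightarrow> (\<Sum>i\<le>degree P. coeff P i * 0)) at_top"
    by (intro tendsto_sum tendsto_mult tendsto_const tendsto_power_div_exp_0)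
  moreover have "(\<lambda>s. \<Sum>i\<le>degree P. coeff P i * (s ^ i / exp s)) = (\<lambda>s. poly P s * exp (-s))"
    by (auto simp: poly_altdef sum_divide_distrib[symmetric] exp_minus field_simps)
  ultimately show ?thesis by simp
qed

lemma flat_exp_has_real_derivative:
  "(flat_exp P has_real_derivative flat_exp (flat_exp_deriv_poly P) t) (at t)"
proof -
  consider "t > 0" | "t < 0" | "t = 0" by linarith
  then show ?thesis
  proof cases
    case 1
    have "((\<lambda>t. poly P (1/t) * exp (-1/t)) has_real_derivative
       (poly (pderiv P) (1/t) * (- 1 / t^2)) * exp (-1/t) + poly P (1/t) * (exp (-1/t) * (1 / t^2))) (at t)"
      using 1 by (auto intro!: derivative_eq_intros DERIV_chain2[OF poly_DERIV] simp: power2_eq_square)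
    also have "(poly (pderiv P) (1/t) * (- 1 / t^2)) * exp (-1/t) + poly P (1/t) * (exp (-1/t) * (1 / t^2))
       = flat_exp (flat_exp_deriv_poly P) t"
      using 1 by (simp add: flat_exp_def flat_exp_deriv_poly_def poly_monom field_simps)
    finally show ?thesis
      by (rule has_field_derivative_transform_within_open[where S="{0<..}"])
         (use 1 in \<open>auto simp: flat_exp_def\<close>)
  next
    case 2
    have "((\<lambda>t. 0) has_real_derivative flat_exp (flat_exp_deriv_poly P) t) (at t)"
      using 2 by (simp add: flat_exp_def)
    then show ?thesis
      by (rule has_field_derivative_transform_within_open[where S="{..<0}"])
         (use 2 in \<open>auto simp: flat_exp_def\<close>)
  next
    case 3
    have right: "((\<lambda>h. flat_exp P h / h) \<longlongrightarrow> 0) (at_right 0)"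
      unfolding filterlim_at_right_to_top
    proof (rule Lim_transform_eventually)
      show "((\<lambda>s. poly (monom 1 1 * P) s * exp (-s)) \<longlongrightarrow> 0) at_top"
        by (rule poly_times_exp_neg_tendsto_0)
      show "\<forall>\<^sub>F s in at_top. poly (monom 1 1 * P) s * exp (-s) = flat_exp P (inverse s) / inverse s"
        using eventually_gt_at_top[of 0]
        by eventually_elim (simp add: flat_exp_def poly_monom field_simps)
    qed
    have "\<forall>\<^sub>F h in at_left (0::real). flat_exp P h / h = 0"
      by (simp add: eventually_at_left_field flat_exp_def) (auto intro: exI[of _ "-1"])
    then have left: "((\<lambda>h. flat_exp P h / h) \<longlongrightarrow> 0) (at_left 0)"
      by (rule tendsto_eventually)
    have "((\<lambda>h. flat_exp P h / h) \<longlongrightarrow> 0) (at 0)"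
      by (rule filterlim_split_at[OF left right])
    then show ?thesis using 3 unfolding DERIV_def by (simp add: flat_exp_def)
  qed
qed

lemma isCont_flat_exp: "isCont (flat_exp P) t"
  using flat_exp_has_real_derivative DERIV_isCont by blast

lemma flat_exp_bump_has_derivative:
  "((\<lambda>x::'a::euclidean_space. flat_exp P (1/4 - x \<bullet> x)) has_derivative
      (\<lambda>v. flat_exp (flat_exp_deriv_poly P) (1/4 - x \<bullet> x) * (- (2 * (x \<bullet> v))))) (at x)"
proof -
  have "((\<lambda>x::'a. 1/4 - x \<bullet> x) has_derivative (\<lambda>v. - (2 * (x \<bullet> v)))) (at x)"
    by (auto intro!: derivative_eq_intros simp: inner_commute)
  from has_derivative_compose[OF this flat_exp_has_real_derivative[unfolded has_field_derivative_def]]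
  show ?thesis by (simp add: mult.commute)
qed

inductive_set bump_algebra :: "('a::euclidean_space \<Rightarrow> real) set" where
  const: "(\<lambda>x. k) \<in> bump_algebra"
| coord: "(\<lambda>x. x \<bullet> j) \<in> bump_algebra"
| add: "f \<in> bump_algebra \<Longrightarrow> g \<in> bump_algebra \<Longrightarrow> (\<lambda>x. f x + g x) \<in> bump_algebra"
| mult: "f \<in> bump_algebra \<Longrightarrow> g \<in> bump_algebra \<Longrightarrow> (\<lambda>x. f x * g x) \<in> bump_algebra"
| bump: "(\<lambda>x. flat_exp P (1/4 - x \<bullet> x)) \<in> bump_algebra"

lemma bump_algebra_has_partials:
  assumes "f \<in> bump_algebra"
  shows "\<exists>D. (\<forall>i\<in>Basis. D i \<in> (bump_algebra :: ('a::euclidean_space \<Rightarrow> real) set)) \<and>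
      (\<forall>x. (f has_derivative (\<lambda>v. \<Sum>i\<in>Basis. (v \<bullet> i) * D i x)) (at x))"
  using assms
proof induction
  case (const k)
  show ?case
    by (rule exI[of _ "\<lambda>i x. 0"]) (auto intro: bump_algebra.const)
next
  case (coord j)
  have "(\<lambda>v. v \<bullet> j) = (\<lambda>v. \<Sum>i\<in>Basis. (v \<bullet> i) * (j \<bullet> i))"
    by (rule ext, subst euclidean_inner) simp
  moreover have "((\<lambda>x::'a. x \<bullet> j) has_derivative (\<lambda>v. v \<bullet> j)) (at x)" for x
    by (auto intro!: derivative_eq_intros)
  ultimately show ?case
    by (intro exI[of _ "\<lambda>i x. j \<bullet> i"]) (auto intro: bump_algebra.const)
next
  case (add f g)
  then obtain Df Dg
    where Df: "\<forall>i\<in>Basis. Df i \<in> bump_algebra" "\<And>x. (f has_derivative (\<lambda>v. \<Sum>i\<in>Basis. (v \<bullet> i) * Df i x)) (at x)"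
      and Dg: "\<forall>i\<in>Basis. Dg i \<in> bump_algebra" "\<And>x. (g has_derivative (\<lambda>v. \<Sum>i\<in>Basis. (v \<bullet> i) * Dg i x)) (at x)"
    by blast
  show ?case
  proof (intro exI[of _ "\<lambda>i x. Df i x + Dg i x"] conjI allI ballI)
    show "(\<lambda>x. Df i x + Dg i x) \<in> bump_algebra" if "i \<in> Basis" for i
      using Df Dg that by (auto intro: bump_algebra.add)
    show "((\<lambda>x. f x + g x) has_derivative (\<lambda>v. \<Sum>i\<in>Basis. (v \<bullet> i) * (Df i x + Dg i x))) (at x)" for x
      using has_derivative_add[OF Df(2) Dg(2)] by (simp add: distrib_left sum.distrib)
  qed
next
  case (mult f g)
  then obtain Df Dg
    where Df: "\<forall>i\<in>Basis. Df i \<in> bump_algebra" "\<And>x. (f has_derivative (\<lambda>v. \<Sum>i\<in>Basis. (v \<bullet> i) * Df i x)) (at x)"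
      and Dg: "\<forall>i\<in>Basis. Dg i \<in> bump_algebra" "\<And>x. (g has_derivative (\<lambda>v. \<Sum>i\<in>Basis. (v \<bullet> i) * Dg i x)) (at x)"
    by blast
  show ?case
  proof (intro exI[of _ "\<lambda>i x. f x * Dg i x + Df i x * g x"] conjI allI ballI)
    show "(\<lambda>x. f x * Dg i x + Df i x * g x) \<in> bump_algebra" if "i \<in> Basis" for i
      using Df Dg that mult.hyps by (auto intro!: bump_algebra.add bump_algebra.mult)
    show "((\<lambda>x. f x * g x) has_derivative
        (\<lambda>v. \<Sum>i\<in>Basis. (v \<bullet> i) * (f x * Dg i x + Df i x * g x))) (at x)" for x
      using has_derivative_mult[OF Df(2) Dg(2)]
      by (simp add: distrib_left sum.distrib sum_distrib_left sum_distrib_right mult_ac)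
  qed
next
  case (bump P)
  let ?d = "\<lambda>x::'a. flat_exp (flat_exp_deriv_poly P) (1/4 - x \<bullet> x)"
  show ?case
  proof (intro exI[of _ "\<lambda>i x. ?d x * ((-2) * (x \<bullet> i))"] conjI allI ballI)
    show "(\<lambda>x. ?d x * ((-2) * (x \<bullet> i))) \<in> bump_algebra" for i
      by (intro bump_algebra.intros)
    fix x :: 'a
    have "(\<lambda>v. ?d x * (- (2 * (x \<bullet> v)))) = (\<lambda>v. \<Sum>i\<in>Basis. (v \<bullet> i) * (?d x * ((-2) * (x \<bullet> i))))"
    proof
      fix v :: 'a
      have "x \<bullet> v = (\<Sum>i\<in>Basis. (v \<bullet> i) * (x \<bullet> i))"
        by (subst euclidean_inner) (simp add: mult.commute)
      then show "?d x * (- (2 * (x \<bullet> v))) = (\<Sum>i\<in>Basis. (v \<bullet> i) * (?d x * ((-2) * (x \<bullet> i))))"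
        by (simp add: sum_distrib_left sum_distrib_right sum_negf mult_ac)
    qed
    then show "((\<lambda>x. flat_exp P (1/4 - x \<bullet> x)) has_derivative
        (\<lambda>v. \<Sum>i\<in>Basis. (v \<bullet> i) * (?d x * ((-2) * (x \<bullet> i))))) (at x)"
      using flat_exp_bump_has_derivative[of P x] by simp
  qed
qed

definition bump :: "'a::euclidean_space \<Rightarrow> real" where
  "bump x = flat_exp 1 (1/4 - x \<bullet> x)"

definition bump_grad :: "'a::euclidean_space \<Rightarrow> 'a" where
  "bump_grad x = (flat_exp (flat_exp_deriv_poly 1) (1/4 - x \<bullet> x) * (-2)) *\<^sub>R x"

lemma test_fun_bump: "test_fun (bump :: 'a::euclidean_space \<Rightarrow> real) bump_grad"
  unfolding test_fun_def
proof (intro conjI allI)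
  show "smooth_fun (bump :: 'a \<Rightarrow> real)"
    unfolding smooth_fun_def bump_def[abs_def]
    by (intro exI[of _ bump_algebra] conjI bump_algebra.bump ballI bump_algebra_has_partials)
  show "(bump has_derivative (\<lambda>v. bump_grad x \<bullet> v)) (at x)" for x :: 'a
    using flat_exp_bump_has_derivative[of 1 x] unfolding bump_def[abs_def] bump_grad_def
    by (simp add: mult_ac)
  show "\<exists>K. compact K \<and> K \<subseteq> (unit_ball :: 'a set) \<and> (\<forall>x. x \<notin> K \<longrightarrow> bump x = 0)"
  proof (intro exI[of _ "cball 0 (1/2)"] conjI allI impI)
    fix x :: 'a assume "x \<notin> cball 0 (1/2)"
    then have "(1/2)\<^sup>2 < (norm x)\<^sup>2" by (intro power_strict_mono) auto
    then show "bump x = 0" by (simp add: bump_def flat_exp_def dot_square_norm power2_eq_square)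
  qed auto
qed

lemma bump_pos: "norm (x::'a::euclidean_space) < 1/2 \<Longrightarrow> 0 < bump x"
proof -
  assume "norm x < 1/2"
  then have "(norm x)\<^sup>2 < (1/2)\<^sup>2" by (intro power_strict_mono) auto
  then show ?thesis by (simp add: bump_def flat_exp_def dot_square_norm power2_eq_square)
qed

lemma set_integrable_unit_ball_continuous:
  fixes f :: "'a::euclidean_space \<Rightarrow> real"
  assumes "continuous_on UNIV f"
  shows "set_integrable lborel unit_ball f"
proof -
  have "set_integrable lborel (cball (0::'a) 1) f"
    unfolding set_integrable_def
    by (rule borel_integrable_compact) (auto intro: continuous_on_subset[OF assms])
  then show ?thesis by (rule set_integrable_subset) auto
qed

lemma ex_H10_nonzero: "\<exists>(u::'a::euclidean_space \<Rightarrow> real) g. H10 u g \<and> H10_nonzero u"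
proof (intro exI conjI)
  have cont: "continuous_on UNIV (bump :: 'a \<Rightarrow> real)" "continuous_on UNIV (bump_grad :: 'a \<Rightarrow> 'a)"
    unfolding bump_def[abs_def] bump_grad_def[abs_def]
    by (intro continuous_at_imp_continuous_on ballI continuous_intros isCont_o2[OF _ isCont_flat_exp])+
  show "H10 (bump :: 'a \<Rightarrow> real) bump_grad"
    unfolding H10_def
  proof (intro conjI exI[of _ "\<lambda>n. bump"] exI[of _ "\<lambda>n. bump_grad"] allI test_fun_bump)
    show "(bump :: 'a \<Rightarrow> real) \<in> borel_measurable lborel"
      "(bump_grad :: 'a \<Rightarrow> 'a) \<in> borel_measurable lborel"
      using borel_measurable_continuous_onI[OF cont(1)] borel_measurable_continuous_onI[OF cont(2)]
      by simp_all
    show "set_integrable lborel unit_ball (\<lambda>x::'a. (bump x)\<^sup>2)"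
      "set_integrable lborel unit_ball (\<lambda>x::'a. (norm (bump_grad x))\<^sup>2)"
      by (intro set_integrable_unit_ball_continuous continuous_intros cont)+
  qed simp_all
  show "H10_nonzero (bump :: 'a \<Rightarrow> real)"
    unfolding H10_nonzero_def
  proof
    assume "AE x in lborel. (x::'a) \<in> unit_ball \<longrightarrow> bump x = 0"
    then have "AE x in lborel. x \<notin> ball (0::'a) (1/2)"
    proof (rule AE_mp, intro AE_I2 impI)
      fix x :: 'a
      assume "x \<in> unit_ball \<longrightarrow> bump x = 0"
      then show "x \<notin> ball 0 (1/2)" using bump_pos[of x] by auto
    qed
    then have "ball (0::'a) (1/2) \<in> null_sets lborel"
      by (subst AE_iff_null_sets) auto
    then show False
      using content_ball_pos[of "1/2" "0::'a"] by (simp add: null_sets_def measure_def)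
  qed
qed

section \<open>Transplanting into a small ball\<close>

text \<open>shrink t l f is f \<circ> (\<lambda>x. t + l x), cut off outside the preimage of B; for
  t = -l xc it is a copy of f squeezed into ball xc (1/l).\<close>

definition shrink :: "'a::euclidean_space \<Rightarrow> real \<Rightarrow> ('a \<Rightarrow> 'b::zero) \<Rightarrow> 'a \<Rightarrow> 'b" where
  "shrink t l f x = (if t + l *\<^sub>R x \<in> unit_ball then f (t + l *\<^sub>R x) else 0)"

lemma borel_measurable_shrink [measurable]:
  fixes f :: "'a::euclidean_space \<Rightarrow> 'b::real_normed_vector"
  assumes [measurable]: "f \<in> borel_measurable borel"
  shows "shrink t l f \<in> borel_measurable borel"
proof -
  have [measurable]: "(\<lambda>x. t + l *\<^sub>R x) \<in> borel_measurable (borel :: 'a measure)"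
    by (intro borel_measurable_continuous_onI continuous_intros)
  have [measurable]: "Measurable.pred borel (\<lambda>x. t + l *\<^sub>R x \<in> (unit_ball :: 'a set))"
    by (rule pred_sets2[where N=borel]) simp_all
  show ?thesis unfolding shrink_def[abs_def] by measurable
qed

lemma shrink_diff:
  fixes f g :: "'a::euclidean_space \<Rightarrow> 'b::ab_group_add"
  shows "shrink t l (\<lambda>y. f y - g y) x = shrink t l f x - shrink t l g x"
  by (simp add: shrink_def)

lemma indicator_times_shrink:
  assumes into: "\<And>x. t + l *\<^sub>R x \<in> unit_ball \<Longrightarrow> x \<in> unit_ball" and "h 0 = 0"
  shows "indicator unit_ball x * h (shrink t l f x)
    = indicator unit_ball (t + l *\<^sub>R x) * (h (f (t + l *\<^sub>R x)) :: real)"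
  using into[of x] assms(2) by (auto simp: shrink_def indicator_def)

lemma set_integrable_shrink_iff:
  fixes f :: "'a::euclidean_space \<Rightarrow> 'b::zero" and h :: "'b \<Rightarrow> real"
  assumes "0 < l" and into: "\<And>x. t + l *\<^sub>R x \<in> unit_ball \<Longrightarrow> x \<in> unit_ball" and "h 0 = 0"
  shows "set_integrable lborel unit_ball (\<lambda>x. h (shrink t l f x))
    \<longleftrightarrow> set_integrable lborel unit_ball (\<lambda>y. h (f y))"
proof -
  have "(\<lambda>x. indicator unit_ball x * h (shrink t l f x))
      = (\<lambda>x. (\<lambda>y. indicator unit_ball y * h (f y)) (t + l *\<^sub>R x))"
    using indicator_times_shrink[where t=t and l=l and h=h, OF into \<open>h 0 = 0\<close>] by auto
  then show ?thesis
    unfolding set_integrable_def using lborel_integrable_affine_iff[of l _ t] \<open>0 < l\<close> by simp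
qed

lemma set_integral_shrink:
  fixes f :: "'a::euclidean_space \<Rightarrow> 'b::zero" and h :: "'b \<Rightarrow> real"
  assumes "0 < l" and into: "\<And>x. t + l *\<^sub>R x \<in> unit_ball \<Longrightarrow> x \<in> unit_ball" and "h 0 = 0"
  shows "(LINT x : unit_ball | lborel. h (shrink t l f x))
    = (LINT y : unit_ball | lborel. h (f y)) / l ^ DIM('a)"
proof -
  have "(\<lambda>x. indicator unit_ball x * h (shrink t l f x))
      = (\<lambda>x. (\<lambda>y. indicator unit_ball y * h (f y)) (t + l *\<^sub>R x))"
    using indicator_times_shrink[where t=t and l=l and h=h, OF into \<open>h 0 = 0\<close>] by auto
  then show ?thesis
    unfolding set_lebesgue_integral_def
    using lborel_integral_affine[of l "\<lambda>y. indicator unit_ball y * h (f y)" t] \<open>0 < l\<close> by simp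
qed

lemma H10_shrink:
  fixes u :: "'a::euclidean_space \<Rightarrow> real"
  assumes H: "H10 u g" and l: "0 < l" and into: "\<And>x. t + l *\<^sub>R x \<in> unit_ball \<Longrightarrow> x \<in> unit_ball"
  shows "H10 (shrink t l u) (shrink t l (\<lambda>y. l *\<^sub>R g y))"
proof -
  note shrink_iff = set_integrable_shrink_iff[where t=t, OF l into]
    and shrink_int = set_integral_shrink[where t=t, OF l into]
  have [measurable]: "u \<in> borel_measurable borel" "g \<in> borel_measurable borel"
    and u2: "set_integrable lborel unit_ball (\<lambda>x. (u x)\<^sup>2)"
    and g2: "set_integrable lborel unit_ball (\<lambda>x. (norm (g x))\<^sup>2)"
    using H unfolding H10_def by auto
  obtain \<phi> G where \<phi>: "\<And>n. test_fun (\<phi> n) (G n)"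
    and \<phi>_lim: "(\<lambda>n. LINT x : unit_ball | lborel. (\<phi> n x - u x)\<^sup>2) \<longlonglongrightarrow> 0"
    and G_lim: "(\<lambda>n. LINT x : unit_ball | lborel. (norm (G n x - g x))\<^sup>2) \<longlonglongrightarrow> 0"
    using H unfolding H10_def by blast
  have shrink_\<phi>: "\<phi> n (t + l *\<^sub>R x) = shrink t l (\<phi> n) x"
    and shrink_G: "l *\<^sub>R G n (t + l *\<^sub>R x) = shrink t l (\<lambda>y. l *\<^sub>R G n y) x" for n x
    using test_fun_vanishes_outside_ball[OF \<phi>] by (auto simp: shrink_def)
  show ?thesis
    unfolding H10_def
  proof (intro conjI exI[of _ "\<lambda>n x. \<phi> n (t + l *\<^sub>R x)"] exI[of _ "\<lambda>n x. l *\<^sub>R G n (t + l *\<^sub>R x)"] allI)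
    show "shrink t l u \<in> borel_measurable lborel" "shrink t l (\<lambda>y. l *\<^sub>R g y) \<in> borel_measurable lborel"
      by simp_all
    show "set_integrable lborel unit_ball (\<lambda>x. (shrink t l u x)\<^sup>2)"
      using shrink_iff[where h="\<lambda>v. v\<^sup>2"] u2 by simp
    show "set_integrable lborel unit_ball (\<lambda>x. (norm (shrink t l (\<lambda>y. l *\<^sub>R g y) x))\<^sup>2)"
      using shrink_iff[where h="\<lambda>v. (norm v)\<^sup>2" and f="\<lambda>y. l *\<^sub>R g y"] set_integrable_mult_right[OF g2, of "l\<^sup>2"]
      by (simp add: power_mult_distrib)
    show "test_fun (\<lambda>x. \<phi> n (t + l *\<^sub>R x)) (\<lambda>x. l *\<^sub>R G n (t + l *\<^sub>R x))" for n
      using l by (intro test_fun_affine[OF \<phi> _ into]) simp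
    have "(LINT x : unit_ball | lborel. (\<phi> n (t + l *\<^sub>R x) - shrink t l u x)\<^sup>2)
        = (LINT x : unit_ball | lborel. (\<phi> n x - u x)\<^sup>2) / l ^ DIM('a)" for n
      using shrink_int[where h="\<lambda>v. v\<^sup>2" and f="\<lambda>y. \<phi> n y - u y"]
      by (simp add: shrink_\<phi> shrink_diff)
    with \<phi>_lim show "(\<lambda>n. LINT x : unit_ball | lborel. (\<phi> n (t + l *\<^sub>R x) - shrink t l u x)\<^sup>2) \<longlonglongrightarrow> 0"
      by (simp add: tendsto_divide_zero)
    have "(LINT x : unit_ball | lborel. (norm (l *\<^sub>R G n (t + l *\<^sub>R x) - shrink t l (\<lambda>y. l *\<^sub>R g y) x))\<^sup>2)
        = l\<^sup>2 * (LINT x : unit_ball | lborel. (norm (G n x - g x))\<^sup>2) / l ^ DIM('a)" for n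
    proof -
      have "l *\<^sub>R G n (t + l *\<^sub>R x) - shrink t l (\<lambda>y. l *\<^sub>R g y) x
          = shrink t l (\<lambda>y. l *\<^sub>R (G n y - g y)) x" for x
        by (simp add: shrink_G shrink_diff scaleR_diff_right)
      then show ?thesis
        using shrink_int[where h="\<lambda>v. (norm v)\<^sup>2" and f="\<lambda>y. l *\<^sub>R (G n y - g y)"]
        by (simp add: power_mult_distrib)
    qed
    with G_lim show "(\<lambda>n. LINT x : unit_ball | lborel.
        (norm (l *\<^sub>R G n (t + l *\<^sub>R x) - shrink t l (\<lambda>y. l *\<^sub>R g y) x))\<^sup>2) \<longlonglongrightarrow> 0"
      by (simp add: tendsto_divide_zero tendsto_mult_right_zero)
  qed
qed

lemma H10_nonzero_shrink:
  fixes u :: "'a::euclidean_space \<Rightarrow> real"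
  assumes "H10_nonzero u" and [measurable]: "u \<in> borel_measurable borel" and "l \<noteq> 0"
    and into: "\<And>x. t + l *\<^sub>R x \<in> unit_ball \<Longrightarrow> x \<in> unit_ball"
  shows "H10_nonzero (shrink t l u)"
  unfolding H10_nonzero_def
proof
  assume "AE x in lborel. x \<in> unit_ball \<longrightarrow> shrink t l u x = 0"
  then have "AE x in lborel. t + l *\<^sub>R x \<in> unit_ball \<longrightarrow> u (t + l *\<^sub>R x) = 0"
  proof (rule AE_mp, intro AE_I2 impI)
    fix x assume "x \<in> unit_ball \<longrightarrow> shrink t l u x = 0" and "t + l *\<^sub>R x \<in> unit_ball"
    then show "u (t + l *\<^sub>R x) = 0" using into by (auto simp: shrink_def)
  qed
  then have "AE y in lborel. y \<in> unit_ball \<longrightarrow> u y = 0"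
  proof (rule AE_lborel_affine[OF \<open>l \<noteq> 0\<close>, rotated])
    have "Measurable.pred borel (\<lambda>x::'a. x \<in> unit_ball)" by (simp add: pred_def)
    then show "Measurable.pred borel (\<lambda>y. y \<in> unit_ball \<longrightarrow> u y = 0)" by measurable
  qed
  with assms(1) show False unfolding H10_nonzero_def by blast
qed

definition rayleigh_quotient ::
    "(real \<Rightarrow> real) \<Rightarrow> real \<Rightarrow> ('a::euclidean_space \<Rightarrow> real) \<Rightarrow> ('a \<Rightarrow> 'a) \<Rightarrow> real" where
  "rayleigh_quotient W p u g = (LINT x : unit_ball | lborel. (norm (g x))\<^sup>2) /
        (LINT x : unit_ball | lborel. W (norm x) * \<bar>u x\<bar> powr (p + 1)) powr (2 / (p + 1))"

lemma Sweight_eq_Inf_rayleigh_quotient: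
  "Sweight W p TYPE('a::euclidean_space)
    = Inf {rayleigh_quotient W p u g | (u::'a \<Rightarrow> real) g. H10 u g \<and> H10_nonzero u}"
  unfolding Sweight_def rayleigh_quotient_def ..

lemma rayleigh_quotient_nonneg:
  assumes "\<And>x. 0 \<le> W (norm x)"
  shows "0 \<le> rayleigh_quotient W p u g"
  unfolding rayleigh_quotient_def set_lebesgue_integral_def
  by (intro divide_nonneg_nonneg integral_nonneg_AE AE_I2) (auto simp: assms)

lemma Sweight_le_rayleigh_quotient:
  assumes "\<And>x. 0 \<le> W (norm x)" and "H10 u g" "H10_nonzero u"
  shows "Sweight W p TYPE('a::euclidean_space) \<le> rayleigh_quotient W p (u::'a \<Rightarrow> real) g"
  unfolding Sweight_eq_Inf_rayleigh_quotient
  using assms rayleigh_quotient_nonneg[of W, OF assms(1)]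
  by (intro cInf_lower) (auto intro!: bdd_belowI[of _ 0])

lemma set_integral_weight_bounds:
  fixes f w :: "'a::euclidean_space \<Rightarrow> real"
  assumes [measurable]: "f \<in> borel_measurable lborel" "w \<in> borel_measurable lborel" "A \<in> sets lborel"
    and "0 < m" and f_nonneg: "\<And>x. x \<in> A \<Longrightarrow> 0 \<le> f x"
    and w_bounds: "\<And>x. x \<in> A \<Longrightarrow> f x \<noteq> 0 \<Longrightarrow> m \<le> w x \<and> w x \<le> 1"
  shows "m * (LINT x : A | lborel. f x) \<le> (LINT x : A | lborel. w x * f x)"
    and "(LINT x : A | lborel. w x * f x) \<le> (LINT x : A | lborel. f x)"
proof -
  have below: "m * f x \<le> w x * f x" and above: "w x * f x \<le> f x" and wf_nonneg: "0 \<le> w x * f x" if "x \<in> A" for x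
    using w_bounds[OF that] f_nonneg[OF that] \<open>0 < m\<close>
    by (cases "f x = 0"; auto intro: mult_right_mono mult_left_le_one_le)+
  have meas: "set_borel_measurable lborel A f" "set_borel_measurable lborel A (\<lambda>x. w x * f x)"
    unfolding set_borel_measurable_def by measurable
  have integrable_iff: "set_integrable lborel A (\<lambda>x. w x * f x) \<longleftrightarrow> set_integrable lborel A f"
  proof
    assume "set_integrable lborel A (\<lambda>x. w x * f x)"
    then have "set_integrable lborel A (\<lambda>x. (1/m) * (w x * f x))" by simp
    then show "set_integrable lborel A f"
    proof (rule set_integrable_bound[OF _ meas(1)], intro AE_I2 impI)
      fix x assume "x \<in> A"
      with below[of x] f_nonneg[of x] \<open>0 < m\<close> show "norm (f x) \<le> norm ((1/m) * (w x * f x))"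
        by (simp add: field_simps)
    qed
  next
    assume "set_integrable lborel A f"
    then show "set_integrable lborel A (\<lambda>x. w x * f x)"
    proof (rule set_integrable_bound[OF _ meas(2)], intro AE_I2 impI)
      fix x assume "x \<in> A"
      with above[of x] f_nonneg[of x] wf_nonneg[of x]
      show "norm (w x * f x) \<le> norm (f x)" by simp
    qed
  qed
  have "m * (LINT x : A | lborel. f x) \<le> (LINT x : A | lborel. w x * f x) \<and>
      (LINT x : A | lborel. w x * f x) \<le> (LINT x : A | lborel. f x)"
  proof (cases "set_integrable lborel A f")
    case True
    with integrable_iff below above show ?thesis
      by (auto simp flip: set_integral_mult_right intro!: set_integral_mono)
  next
    case False
    with integrable_iff show ?thesis
      by (auto simp: set_lebesgue_integral_def set_integrable_def not_integrable_integral_eq)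
  qed
  then show "m * (LINT x : A | lborel. f x) \<le> (LINT x : A | lborel. w x * f x)"
    and "(LINT x : A | lborel. w x * f x) \<le> (LINT x : A | lborel. f x)"
    by auto
qed

lemma rescaled_quotient_le:
  fixes J J' I I' l m r :: real and N :: nat
  assumes "0 \<le> J" "0 < m" "0 < l" "0 \<le> r" "0 \<le> I"
    and J': "J' = l\<^sup>2 * J / l ^ N"
    and lower: "m * (I / l ^ N) \<le> I'" and upper: "I' \<le> I / l ^ N"
  shows "J' / I' powr r \<le> l powr (2 - real N + real N * r) * m powr (- r) * (J / I powr r)"
proof (cases "I = 0")
  case True
  with lower upper have "I' = 0" by simp
  with True show ?thesis by simp
next
  case False
  with assms have "0 < m * (I / l ^ N)" by simp
  with assms have "J' / I' powr r \<le> (l\<^sup>2 * J / l ^ N) / (m * (I / l ^ N)) powr r"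
    unfolding J' by (intro divide_left_mono powr_mono2 mult_pos_pos) auto
  also have "\<dots> = l powr (2 - real N + real N * r) * m powr (- r) * (J / I powr r)"
  proof -
    have l_pow: "l ^ N = l powr real N" using \<open>0 < l\<close> by (simp add: powr_realpow)
    have denom: "(m * (I / l ^ N)) powr r = m powr r * I powr r / l powr (real N * r)"
      using assms False unfolding l_pow by (simp add: powr_mult powr_divide powr_powr)
    have "l powr (2 - real N + real N * r) = l powr ((2 + real N * r) - real N)"
      by (simp add: algebra_simps)
    also have "\<dots> = l powr 2 * l powr (real N * r) / l powr real N"
      by (simp add: powr_diff powr_add)
    also have "\<dots> = l\<^sup>2 / l ^ N * l powr (real N * r)"
      using \<open>0 < l\<close> by (simp add: l_pow)
    finally have numer: "l powr (2 - real N + real N * r) = l\<^sup>2 / l ^ N * l powr (real N * r)" .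
    have "0 < m powr r" "0 < I powr r" "0 < l powr (real N * r)" "0 < l ^ N"
      using assms False by auto
    then show ?thesis
      unfolding denom numer by (simp add: powr_minus_divide field_simps)
  qed
  finally show ?thesis .
qed

lemma Sweight_le_scaled_rayleigh_quotient:
  fixes u :: "'a::euclidean_space \<Rightarrow> real" and W :: "real \<Rightarrow> real" and xc :: 'a
  assumes H: "H10 u g" and nz: "H10_nonzero u" and l: "0 < l" and xc: "norm xc + 1/l \<le> 1"
    and m: "0 < m" and p: "-1 < p"
    and [measurable]: "(\<lambda>x::'a. W (norm x)) \<in> borel_measurable lborel"
    and W_nonneg: "\<And>x::'a. 0 \<le> W (norm x)"
    and W_bounds: "\<And>x. x \<in> ball xc (1/l) \<Longrightarrow> m \<le> W (norm x) \<and> W (norm x) \<le> 1"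
  shows "Sweight W p TYPE('a) \<le> l powr (2 - real DIM('a) + 2 * real DIM('a) / (p + 1)) * m powr (-2 / (p + 1))
           * rayleigh_quotient (\<lambda>_. 1) p u g"
proof -
  define t where "t = - (l *\<^sub>R xc)"
  have to_small_ball: "x \<in> ball xc (1/l)" if "t + l *\<^sub>R x \<in> unit_ball" for x
  proof -
    have "norm (l *\<^sub>R (x - xc)) < 1" using that by (simp add: t_def flip: scaleR_diff_right)
    then have "l * norm (x - xc) < 1" using l by simp
    then show ?thesis using l by (simp add: dist_norm norm_minus_commute field_simps)
  qed
  have "ball xc (1/l) \<subseteq> unit_ball"
    using xc by (simp add: ball_subset_ball_iff dist_norm)
  with to_small_ball have into: "x \<in> unit_ball" if "t + l *\<^sub>R x \<in> unit_ball" for x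
    using that by blast
  define u' where "u' = shrink t l u"
  define g' where "g' = shrink t l (\<lambda>y. l *\<^sub>R g y)"
  have [measurable]: "u \<in> borel_measurable borel" "g \<in> borel_measurable borel"
    using H unfolding H10_def by auto
  have "Sweight W p TYPE('a) \<le> rayleigh_quotient W p u' g'"
    using W_nonneg H10_shrink[OF H l into] H10_nonzero_shrink[OF nz _ _ into] l
    unfolding u'_def g'_def by (intro Sweight_le_rayleigh_quotient) auto
  also have "\<dots> \<le> l powr (2 - real DIM('a) + real DIM('a) * (2 / (p + 1))) * m powr (- (2 / (p + 1)))
      * rayleigh_quotient (\<lambda>_. 1) p u g"
    unfolding rayleigh_quotient_def
  proof (rule rescaled_quotient_le)
    show "(LINT x : unit_ball | lborel. (norm (g' x))\<^sup>2)
        = l\<^sup>2 * (LINT x : unit_ball | lborel. (norm (g x))\<^sup>2) / l ^ DIM('a)"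
      using set_integral_shrink[where h="\<lambda>v. (norm v)\<^sup>2" and f="\<lambda>y. l *\<^sub>R g y", OF l into]
      unfolding g'_def by (simp add: power_mult_distrib)
    have u'_int: "(LINT x : unit_ball | lborel. \<bar>u' x\<bar> powr (p + 1))
        = (LINT x : unit_ball | lborel. 1 * \<bar>u x\<bar> powr (p + 1)) / l ^ DIM('a)"
      using set_integral_shrink[where h="\<lambda>v. \<bar>v\<bar> powr (p + 1)" and f=u, OF l into]
      unfolding u'_def by simp
    have "m * (LINT x : unit_ball | lborel. \<bar>u' x\<bar> powr (p + 1))
          \<le> (LINT x : unit_ball | lborel. W (norm x) * \<bar>u' x\<bar> powr (p + 1))"
      and "(LINT x : unit_ball | lborel. W (norm x) * \<bar>u' x\<bar> powr (p + 1))
          \<le> (LINT x : unit_ball | lborel. \<bar>u' x\<bar> powr (p + 1))"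
      using m W_bounds to_small_ball
      by (intro set_integral_weight_bounds; auto simp: u'_def shrink_def split: if_splits)+
    with u'_int show "m * ((LINT x : unit_ball | lborel. 1 * \<bar>u x\<bar> powr (p + 1)) / l ^ DIM('a))
          \<le> (LINT x : unit_ball | lborel. W (norm x) * \<bar>u' x\<bar> powr (p + 1))"
      and "(LINT x : unit_ball | lborel. W (norm x) * \<bar>u' x\<bar> powr (p + 1))
          \<le> (LINT x : unit_ball | lborel. 1 * \<bar>u x\<bar> powr (p + 1)) / l ^ DIM('a)"
      by simp_all
  qed (use l m p in \<open>auto simp: set_lebesgue_integral_def intro!: integral_nonneg_AE\<close>)
  finally show ?thesis by (simp add: mult.commute)
qed

section \<open>Asymptotics in \<alpha>\<close>

lemma Limsup_scaled_Sweight_le: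
  fixes W :: "real \<Rightarrow> real \<Rightarrow> real" and u :: "'a::euclidean_space \<Rightarrow> real"
  assumes H: "H10 u g" and nz: "H10_nonzero u" and p: "-1 < p"
    and meas: "\<And>\<alpha>. (\<lambda>x::'a. W \<alpha> (norm x)) \<in> borel_measurable lborel"
    and nonneg: "\<And>\<alpha> (x::'a). 0 \<le> W \<alpha> (norm x)"
    and balls: "\<forall>\<^sub>F \<alpha> in at_top. \<exists>xc::'a. norm xc + 1/\<alpha> \<le> 1 \<and>
        (\<forall>x\<in>ball xc (1/\<alpha>). (1 - c/\<alpha>) powr \<alpha> \<le> W \<alpha> (norm x) \<and> W \<alpha> (norm x) \<le> 1)"
  shows "Limsup at_top (\<lambda>\<alpha>. ereal (Sweight (W \<alpha>) p TYPE('a) *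
            \<alpha> powr (real DIM('a) - 2 - 2 * real DIM('a) / (p + 1))))
         \<le> ereal (exp (2 * c / (p + 1)) * rayleigh_quotient (\<lambda>_. 1) p u g)"
proof -
  define E where "E = 2 - real DIM('a) + 2 * real DIM('a) / (p + 1)"
  define r where "r = 2 / (p + 1)"
  define Q where "Q = rayleigh_quotient (\<lambda>_. 1) p u g"
  have "\<forall>\<^sub>F \<alpha> in at_top. Sweight (W \<alpha>) p TYPE('a) * \<alpha> powr (- E)
      \<le> ((1 + (- c) / \<alpha>) powr \<alpha>) powr (- r) * Q"
    using balls eventually_gt_at_top[of "max 0 c"]
  proof eventually_elim
    case (elim \<alpha>)
    then obtain xc :: 'a where xc: "norm xc + 1/\<alpha> \<le> 1"
      and bounds: "\<And>x. x \<in> ball xc (1/\<alpha>) \<Longrightarrow> (1 - c/\<alpha>) powr \<alpha> \<le> W \<alpha> (norm x) \<and> W \<alpha> (norm x) \<le> 1"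
      by blast
    have "0 < \<alpha>" "c / \<alpha> < 1" using elim by (auto simp: field_simps)
    then have "0 < (1 - c/\<alpha>) powr \<alpha>" by simp
    from Sweight_le_scaled_rayleigh_quotient[OF H nz \<open>0 < \<alpha>\<close> xc this p meas nonneg bounds]
    have "Sweight (W \<alpha>) p TYPE('a) \<le> \<alpha> powr E * ((1 - c/\<alpha>) powr \<alpha>) powr (- r) * Q"
      by (simp add: E_def r_def Q_def)
    then have "Sweight (W \<alpha>) p TYPE('a) * \<alpha> powr (- E)
        \<le> \<alpha> powr E * ((1 - c/\<alpha>) powr \<alpha>) powr (- r) * Q * \<alpha> powr (- E)"
      by (rule mult_right_mono) simp
    also have "\<dots> = (\<alpha> powr E * \<alpha> powr (- E)) * (((1 - c/\<alpha>) powr \<alpha>) powr (- r) * Q)"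
      by (simp only: mult_ac)
    finally have "Sweight (W \<alpha>) p TYPE('a) * \<alpha> powr (- E)
        \<le> (\<alpha> powr E * \<alpha> powr (- E)) * (((1 - c/\<alpha>) powr \<alpha>) powr (- r) * Q)" .
    with \<open>0 < \<alpha>\<close> show ?case by (simp add: powr_minus)
  qed
  moreover have "((\<lambda>\<alpha>. ((1 + (- c) / \<alpha>) powr \<alpha>) powr (- r) * Q) \<longlongrightarrow> exp (- c) powr (- r) * Q) at_top"
    by (intro tendsto_mult tendsto_const tendsto_powr tendsto_exp_limit_at_top) simp
  moreover have "exp (- c) powr (- r) = exp (2 * c / (p + 1))"
    by (simp add: exp_powr_real r_def)
  ultimately have "Limsup at_top (\<lambda>\<alpha>. ereal (Sweight (W \<alpha>) p TYPE('a) * \<alpha> powr (- E)))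
      \<le> Limsup at_top (\<lambda>\<alpha>. ereal (((1 + (- c) / \<alpha>) powr \<alpha>) powr (- r) * Q))"
    and "Limsup at_top (\<lambda>\<alpha>. ereal (((1 + (- c) / \<alpha>) powr \<alpha>) powr (- r) * Q))
      = ereal (exp (2 * c / (p + 1)) * Q)"
    by (auto intro!: Limsup_mono lim_imp_Limsup elim!: eventually_mono)
  then show ?thesis
    by (simp add: E_def Q_def algebra_simps)
qed

lemma ereal_le_mult_Inf:
  fixes L :: ereal and X :: "real set"
  assumes "X \<noteq> {}" "bdd_below X" "0 \<le> k" and le: "\<And>Q. Q \<in> X \<Longrightarrow> L \<le> ereal (k * Q)"
  shows "L \<le> ereal (k * Inf X)"
proof (rule ccontr)
  assume "\<not> L \<le> ereal (k * Inf X)"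
  then have "ereal (k * Inf X) < L" by simp
  then obtain z where z: "k * Inf X < z" "ereal z < L"
    using ereal_dense2 by force
  have below: "z < k * Q" if "Q \<in> X" for Q
    using order.strict_trans2[OF z(2) le[OF that]] by simp
  show False
  proof (cases "k = 0")
    case True
    with below z(1) \<open>X \<noteq> {}\<close> show False by fastforce
  next
    case False
    with z \<open>0 \<le> k\<close> have "Inf X < z / k" by (simp add: field_simps)
    then obtain Q where "Q \<in> X" "Q < z / k" using cInf_lessD[OF \<open>X \<noteq> {}\<close>] by blast
    with below[of Q] False \<open>0 \<le> k\<close> show False by (simp add: field_simps)
  qed
qed

lemma Limsup_scaled_S_alpha_R_le:
  assumes p: "-1 < p"
    and balls: "\<forall>\<^sub>F \<alpha> in at_top. \<exists>xc::'a::euclidean_space. norm xc + 1/\<alpha> \<le> 1 \<and>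
        (\<forall>x\<in>ball xc (1/\<alpha>). (1 - c/\<alpha>) powr \<alpha> \<le> V R \<alpha> (norm x) \<and> V R \<alpha> (norm x) \<le> 1)"
  shows "Limsup at_top (\<lambda>\<alpha>. ereal (S_alpha_R p \<alpha> R TYPE('a) *
            \<alpha> powr (real DIM('a) - 2 - 2 * real DIM('a) / (p + 1))))
         \<le> ereal (exp (2 * c / (p + 1)) * S_const p TYPE('a))"
  unfolding S_const_def Sweight_eq_Inf_rayleigh_quotient
proof (rule ereal_le_mult_Inf)
  show "{rayleigh_quotient (\<lambda>_. 1) p u g | (u::'a \<Rightarrow> real) g. H10 u g \<and> H10_nonzero u} \<noteq> {}"
    using ex_H10_nonzero by blast
  show "bdd_below {rayleigh_quotient (\<lambda>_. 1) p u g | (u::'a \<Rightarrow> real) g. H10 u g \<and> H10_nonzero u}"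
    by (rule bdd_belowI[of _ 0]) (auto intro: rayleigh_quotient_nonneg)
  have "V R \<alpha> \<in> borel_measurable borel" for \<alpha>
    unfolding V_def[abs_def] by measurable
  then have V_meas: "(\<lambda>x::'a. V R \<alpha> (norm x)) \<in> borel_measurable lborel" for \<alpha>
    by (simp add: measurable_compose[OF borel_measurable_norm])
  have V_nonneg: "0 \<le> V R \<alpha> r" for \<alpha> r
    by (simp add: V_def)
  fix Q assume "Q \<in> {rayleigh_quotient (\<lambda>_. 1) p u g | (u::'a \<Rightarrow> real) g. H10 u g \<and> H10_nonzero u}"
  then obtain u g where H: "H10 (u::'a \<Rightarrow> real) g" and nz: "H10_nonzero u"
    and Q: "Q = rayleigh_quotient (\<lambda>_. 1) p u g"
    by blast
  from Q Limsup_scaled_Sweight_le[OF H nz p V_meas V_nonneg balls]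
  show "Limsup at_top (\<lambda>\<alpha>. ereal (S_alpha_R p \<alpha> R TYPE('a) *
            \<alpha> powr (real DIM('a) - 2 - 2 * real DIM('a) / (p + 1))))
      \<le> ereal (exp (2 * c / (p + 1)) * Q)"
    unfolding S_alpha_R_def by simp
qed simp

lemma V_bounds_near_centre:
  assumes "0 < R" "0 \<le> r" "r \<le> \<delta>" "\<delta> < R" "0 \<le> \<alpha>"
  shows "(1 - \<delta> / R) powr \<alpha> \<le> V R \<alpha> r \<and> V R \<alpha> r \<le> 1"
proof -
  have "V R \<alpha> r = (1 - r / R) powr \<alpha>"
    using assms by (auto simp: V_def)
  moreover have "0 < 1 - \<delta> / R" "1 - \<delta> / R \<le> 1 - r / R" "1 - r / R \<le> 1"
    using assms by (auto simp: field_simps divide_right_mono)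
  ultimately show ?thesis
    using assms by (auto intro: powr_mono2 powr_le1)
qed

lemma V_bounds_near_sphere:
  assumes "R < 1" "R < r" "r \<le> 1" "1 - r \<le> \<delta>" "\<delta> < 1 - R" "0 \<le> \<alpha>"
  shows "(1 - \<delta> / (1 - R)) powr \<alpha> \<le> V R \<alpha> r \<and> V R \<alpha> r \<le> 1"
proof -
  have "V R \<alpha> r = (1 - (1 - r) / (1 - R)) powr \<alpha>"
    using assms by (auto simp: V_def)
  moreover have "(1 - r) / (1 - R) \<le> \<delta> / (1 - R)"
    using assms by (intro divide_right_mono) auto
  moreover have "0 < 1 - \<delta> / (1 - R)" "1 - (1 - r) / (1 - R) \<le> 1"
    using assms by (auto simp: field_simps)
  ultimately show ?thesis
    using assms by (auto intro: powr_mono2 powr_le1)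
qed

lemma eventually_V_bounded_on_ball_near_centre:
  assumes "0 < R"
  shows "\<forall>\<^sub>F \<alpha> in at_top. \<exists>xc::'a::euclidean_space. norm xc + 1/\<alpha> \<le> 1 \<and>
    (\<forall>x\<in>ball xc (1/\<alpha>). (1 - (2/R)/\<alpha>) powr \<alpha> \<le> V R \<alpha> (norm x) \<and> V R \<alpha> (norm x) \<le> 1)"
  using eventually_gt_at_top[of "max 1 (2/R)"]
proof eventually_elim
  case (elim \<alpha>)
  then have "1 < \<alpha>" "2/\<alpha> < R" using assms by (auto simp: field_simps)
  have "(1 - (2/R)/\<alpha>) powr \<alpha> \<le> V R \<alpha> (norm x) \<and> V R \<alpha> (norm x) \<le> 1"
    if "x \<in> ball (0::'a) (1/\<alpha>)" for x
    using V_bounds_near_centre[OF assms _ _ \<open>2/\<alpha> < R\<close>, of "norm x" \<alpha>] that \<open>1 < \<alpha>\<close>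
    by (simp add: field_simps)
  then show ?case
    using \<open>1 < \<alpha>\<close> by (intro exI[of _ 0]) simp
qed

lemma eventually_V_bounded_on_ball_near_sphere:
  assumes "R < 1"
  shows "\<forall>\<^sub>F \<alpha> in at_top. \<exists>xc::'a::euclidean_space. norm xc + 1/\<alpha> \<le> 1 \<and>
    (\<forall>x\<in>ball xc (1/\<alpha>). (1 - (2/(1-R))/\<alpha>) powr \<alpha> \<le> V R \<alpha> (norm x) \<and> V R \<alpha> (norm x) \<le> 1)"
  using eventually_gt_at_top[of "max 1 (2/(1-R))"]
proof eventually_elim
  case (elim \<alpha>)
  then have "1 < \<alpha>" "2/\<alpha> < 1 - R" using assms by (auto simp: field_simps)
  obtain b :: 'a where "b \<in> Basis" using nonempty_Basis by blast
  define xc where "xc = (1 - 1/\<alpha>) *\<^sub>R b"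
  have norm_xc: "norm xc = 1 - 1/\<alpha>"
    using \<open>b \<in> Basis\<close> \<open>1 < \<alpha>\<close> by (simp add: xc_def)
  have "(1 - (2/(1-R))/\<alpha>) powr \<alpha> \<le> V R \<alpha> (norm x) \<and> V R \<alpha> (norm x) \<le> 1"
    if "x \<in> ball xc (1/\<alpha>)" for x
  proof -
    have "norm (x - xc) < 1/\<alpha>" using that by (simp add: dist_norm norm_minus_commute)
    with norm_triangle_sub[of x xc] norm_triangle_sub[of xc x] norm_xc
    have "norm x < 1" "1 - 2/\<alpha> < norm x" by (simp_all add: norm_minus_commute)
    moreover from this \<open>2/\<alpha> < 1 - R\<close> have "R < norm x" by simp
    ultimately show ?thesis
      using V_bounds_near_sphere[OF assms \<open>R < norm x\<close> _ _ \<open>2/\<alpha> < 1 - R\<close>, of \<alpha>] \<open>1 < \<alpha>\<close>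
      by (simp add: mult.commute)
  qed
  then show ?case
    using norm_xc by (intro exI[of _ xc]) simp
qed

lemma ereal_le_min_if_times:
  fixes R :: real
  assumes "0 \<le> S" and "R \<noteq> 0 \<Longrightarrow> L \<le> ereal (a * S)" and "R \<noteq> 1 \<Longrightarrow> L \<le> ereal (b * S)"
  shows "L \<le> min (if R = 0 then \<infinity> else ereal a) (if R = 1 then \<infinity> else ereal b) * ereal S"
  using assms by (cases "R = 0"; cases "R = 1"; cases "a \<le> b")
    (auto simp: min_def mult_right_mono)

lemma min_if_exp_le:
  fixes R p :: real
  assumes "0 \<le> R" "R \<le> 1" "0 < p + 1"
  shows "min (if R = 0 then \<infinity> else ereal (exp (4 / (R * (p + 1)))))
             (if R = 1 then \<infinity> else ereal (exp (4 / ((1 - R) * (p + 1)))))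
         \<le> ereal (exp (8 / (p + 1)))"
proof (cases "1/2 \<le> R")
  case True
  then have "4 / R / (p + 1) \<le> 8 / (p + 1)"
    using assms by (intro divide_right_mono) (auto simp: field_simps)
  with True show ?thesis by (auto simp: min_def)
next
  case False
  then have "4 / (1 - R) / (p + 1) \<le> 8 / (p + 1)"
    using assms by (intro divide_right_mono) (auto simp: field_simps)
  with False show ?thesis by (auto simp: min_def)
qed

theorem mainTheorem6:
  fixes p R :: real
  assumes "admissible_p DIM('a::euclidean_space) p"
    and "0 \<le> R" and "R \<le> 1"
  shows "Limsup at_top (\<lambda>\<alpha>::real. ereal (S_alpha_R p \<alpha> R TYPE('a) *
              \<alpha> powr (real DIM('a) - 2 - 2 * real DIM('a) / (p + 1))))
         \<le> min (if R = 0 then \<infinity> else ereal (exp (4 / (R * (p + 1)))))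
               (if R = 1 then \<infinity> else ereal (exp (4 / ((1 - R) * (p + 1)))))
           * ereal (S_const p TYPE('a))
       \<and> min (if R = 0 then \<infinity> else ereal (exp (4 / (R * (p + 1)))))
               (if R = 1 then \<infinity> else ereal (exp (4 / ((1 - R) * (p + 1)))))
           * ereal (S_const p TYPE('a))
         \<le> ereal (exp (8 / (p + 1)) * S_const p TYPE('a))"
proof
  have p: "-1 < p"
    using assms(1) by (simp add: admissible_p_def)
  have S_nonneg: "0 \<le> S_const p TYPE('a)"
    unfolding S_const_def Sweight_eq_Inf_rayleigh_quotient
    using ex_H10_nonzero by (intro cInf_greatest) (auto intro: rayleigh_quotient_nonneg)
  show "Limsup at_top (\<lambda>\<alpha>::real. ereal (S_alpha_R p \<alpha> R TYPE('a) *
              \<alpha> powr (real DIM('a) - 2 - 2 * real DIM('a) / (p + 1))))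
         \<le> min (if R = 0 then \<infinity> else ereal (exp (4 / (R * (p + 1)))))
               (if R = 1 then \<infinity> else ereal (exp (4 / ((1 - R) * (p + 1)))))
           * ereal (S_const p TYPE('a))"
  proof (rule ereal_le_min_if_times[OF S_nonneg])
    assume "R \<noteq> 0"
    with assms(2) Limsup_scaled_S_alpha_R_le[where 'a='a, OF p eventually_V_bounded_on_ball_near_centre]
    show "Limsup at_top (\<lambda>\<alpha>::real. ereal (S_alpha_R p \<alpha> R TYPE('a) *
              \<alpha> powr (real DIM('a) - 2 - 2 * real DIM('a) / (p + 1))))
          \<le> ereal (exp (4 / (R * (p + 1))) * S_const p TYPE('a))"
      by simp
  next
    assume "R \<noteq> 1"
    with assms(3) Limsup_scaled_S_alpha_R_le[where 'a='a, OF p eventually_V_bounded_on_ball_near_sphere]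
    show "Limsup at_top (\<lambda>\<alpha>::real. ereal (S_alpha_R p \<alpha> R TYPE('a) *
              \<alpha> powr (real DIM('a) - 2 - 2 * real DIM('a) / (p + 1))))
          \<le> ereal (exp (4 / ((1 - R) * (p + 1))) * S_const p TYPE('a))"
      by simp
  qed
  show "min (if R = 0 then \<infinity> else ereal (exp (4 / (R * (p + 1)))))
            (if R = 1 then \<infinity> else ereal (exp (4 / ((1 - R) * (p + 1)))))
          * ereal (S_const p TYPE('a))
        \<le> ereal (exp (8 / (p + 1)) * S_const p TYPE('a))"
    using ereal_mult_right_mono[OF min_if_exp_le[OF assms(2,3)], where c="ereal (S_const p TYPE('a))"]
      S_nonneg p by simp
qed

end
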